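(* Let $m\geq 13$ and $k\geq 1$ be integers and let $c(x)=1+\sum_{j\in\{1,2,5,6\}}(x^j+x^{m-j})\in\mathbb{F}_2[x]$. Then $\gcd(c(x^k),x^m-1)=1$ if and only if $\gcd(m,3k)=\gcd(m,k)$.
   Context: All polynomials are over $\mathbb{F}_2$. *)

theory Defs
  imports "HOL-Computational_Algebra.Computational_Algebra" "HOL-Computational_Algebra.Field_as_Ring" "HOL-Library.Z2"
begin
instantiation bit :: "{unique_euclidean_ring, normalization_euclidean_semiring, normalization_semidom_multiplicative}"
begin
definition [simp]: "normalize_bit = (normalize_field :: bit \<Rightarrow> _)"
definition [simp]: "unit_factor_bit = (unit_factor_field :: bit \<Rightarrow> _)"
definition [simp]: "euclidean_size_bit = (euclidean_size_field :: bit \<Rightarrow> _)"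
definition [simp]: "division_segment (x :: bit) = 1"
instance
  by standard (simp_all add: dvd_field_iff field_split_simps split: if_splits)
end
instantiation bit :: euclidean_ring_gcd
begin
definition gcd_bit :: "bit \<Rightarrow> bit \<Rightarrow> bit" where "gcd_bit = Euclidean_Algorithm.gcd"
definition lcm_bit :: "bit \<Rightarrow> bit \<Rightarrow> bit" where "lcm_bit = Euclidean_Algorithm.lcm"
definition Gcd_bit :: "bit set \<Rightarrow> bit" where "Gcd_bit = Euclidean_Algorithm.Gcd"
definition Lcm_bit :: "bit set \<Rightarrow> bit" where "Lcm_bit = Euclidean_Algorithm.Lcm"
instance by standard (simp_all add: gcd_bit_def lcm_bit_def Gcd_bit_def Lcm_bit_def)
end
instance bit :: field_gcd ..

text \<open>F_2 is the type bit (HOL-Library.Z2); above it is given the standard field gcd structure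
  (as the library does for rat/real) so that gcd is available on bit poly.
  c(x) = 1 + sum over j in {1,2,5,6} of (x^j + x^(m-j)).\<close>

definition cpoly :: "nat \<Rightarrow> bit poly" where
  "cpoly m = 1 + (\<Sum>j\<in>{1,2,5,6::nat}. monom 1 j + monom 1 (m - j))"
end

theory Submission
  imports Defs
begin

text \<open>
  Write \<open>\<Phi>(z) = 1 + z + z\<^sup>2\<close> and \<open>y = x\<^sup>k\<close>. Since \<open>c\<close> is self-reciprocal of
  "degree" \<open>m\<close> and \<open>y\<^sup>m \<equiv> 1\<close> modulo \<open>x\<^sup>m - 1\<close>, in characteristic 2 one has
  \<open>y\<^sup>6 c(y) \<equiv> \<Phi>(y)\<^sup>3 \<Phi>(y\<^sup>3)\<close>; as \<open>y\<close> is a unit modulo \<open>x\<^sup>m - 1\<close>, \<open>c(x\<^sup>k)\<close> is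
  coprime to \<open>x\<^sup>m - 1\<close> iff \<open>\<Phi>(x\<^sup>k)\<close> and \<open>\<Phi>(x\<^sup>3\<^sup>k)\<close> are.

  Over a field with \<open>3 \<noteq> 0\<close>, \<open>\<Phi>(x\<^sup>a)\<close> is coprime to \<open>x\<^sup>m - 1\<close> iff
  \<open>gcd(m, 3a) = gcd(m, a)\<close>. A common divisor divides \<open>x\<^sup>3\<^sup>a - 1\<close> and \<open>x\<^sup>m - 1\<close>,
  hence \<open>x\<^bsup>gcd(m,3a)\<^esup> - 1 = x\<^bsup>gcd(m,a)\<^esup> - 1\<close>, hence \<open>x\<^sup>a - 1\<close>, and modulo
  \<open>y - 1\<close> one has \<open>\<Phi>(y) \<equiv> 3\<close>. Conversely, if the gcds differ then
  \<open>m = m' g\<close>, \<open>a = a' g\<close> with \<open>3 | m'\<close>, \<open>3 \<not>| a'\<close>, and \<open>\<Phi>(x\<^sup>g)\<close> divides both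
  \<open>\<Phi>(x\<^sup>a)\<close> and \<open>x\<^sup>m - 1\<close>.
\<close>

lemma power_minus_one_dvd_power_mult_minus_one:
  fixes x :: "'a::comm_ring_1"
  shows "x ^ a - 1 dvd x ^ (a * c) - 1"
  by (simp add: power_mult power_diff_1_eq)

lemma dvd_power_gcd_minus_one:
  fixes x d :: "'a::comm_ring_1"
  assumes "d dvd x ^ a - 1" and "d dvd x ^ b - 1"
  shows "d dvd x ^ gcd a b - 1"
  using assms
proof (induction a b rule: gcd_nat_induct)
  case (base a)
  then show ?case by simp
next
  case (step a b)
  define r q where "r = a mod b" and "q = a div b"
  have "a = r + b * q"
    by (simp add: r_def q_def)
  then have "x ^ a - 1 = x ^ r * (x ^ (b * q) - 1) + (x ^ r - 1)"
    by (simp add: power_add algebra_simps)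
  moreover have "d dvd x ^ (b * q) - 1"
    using step.prems(2) power_minus_one_dvd_power_mult_minus_one dvd_trans by blast
  ultimately have "d dvd x ^ r - 1"
    using step.prems(1) by (metis add_diff_cancel_left' dvd_diff dvd_mult)
  with step show ?case
    by (simp add: gcd_red_nat[of a b] r_def)
qed

lemma gcd_mult_gcd_right_nat: "gcd (m :: nat) (c * a) = gcd m (c * gcd m a)"
proof -
  have "gcd m (c * a) = gcd (gcd m (c * m)) (c * a)"
    by simp
  also have "\<dots> = gcd m (gcd (c * m) (c * a))"
    by (rule gcd.assoc)
  also have "gcd (c * m) (c * a) = c * gcd m a"
    by (simp add: gcd_mult_distrib_nat)
  finally show ?thesis .
qed

lemma gcd_mult_three_neqE:
  fixes m a :: nat
  assumes "gcd m (3 * a) \<noteq> gcd m a"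
  obtains g m' a' where "g > 0" "m = m' * g" "a = a' * g" "3 dvd m'" "\<not> 3 dvd a'"
proof -
  define g where "g = gcd m a"
  have "g \<noteq> 0"
    using assms by (auto simp: g_def)
  then obtain m' a' where m: "m = m' * g" and a: "a = a' * g" and "coprime m' a'"
    using gcd_coprime_exists[of m a] unfolding g_def by blast
  have "gcd m (3 * a) = gcd m' (3 * a') * g"
    unfolding m a by (simp add: gcd_mult_right gcd.commute mult.assoc[symmetric])
  also have "gcd m' (3 * a') = gcd m' 3"
    using \<open>coprime m' a'\<close> by (rule gcd_mult_right_right_cancel)
  finally have "gcd m (3 * a) = gcd m' 3 * g" .
  then have "gcd m' 3 \<noteq> 1"
    using assms by (auto simp: g_def)
  moreover have "prime (3 :: nat)"
    by simp
  ultimately have "3 dvd m'"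
    by (metis coprime_iff_gcd_eq_1 coprime_commute prime_imp_coprime)
  moreover have "\<not> 3 dvd a'"
    using \<open>coprime m' a'\<close> \<open>3 dvd m'\<close> coprime_common_divisor_nat by fastforce
  ultimately show ?thesis
    using that \<open>g \<noteq> 0\<close> m a by blast
qed

definition cyclotomic3 :: "'a::comm_ring_1 \<Rightarrow> 'a" where
  "cyclotomic3 z = 1 + z + z ^ 2"

lemma power_three_minus_one_eq: "z ^ 3 - 1 = (z - 1) * cyclotomic3 z"
  by (simp add: cyclotomic3_def algebra_simps power2_eq_square power3_eq_cube)

lemma cyclotomic3_dvd_power_minus_one:
  assumes "3 dvd n"
  shows "cyclotomic3 z dvd z ^ n - 1"
proof -
  have "z ^ 3 - 1 dvd z ^ n - 1"
    using assms power_minus_one_dvd_power_mult_minus_one by (metis dvdE)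
  then show ?thesis
    using power_three_minus_one_eq dvd_trans by (metis dvd_triv_right)
qed

lemma cyclotomic3_dvd_cyclotomic3_power:
  assumes "\<not> 3 dvd t"
  shows "cyclotomic3 z dvd cyclotomic3 (z ^ t)"
proof -
  define r where "r = t mod 3"
  define q where "q = t div 3"
  have t: "t = r + 3 * q"
    by (simp add: r_def q_def)
  have "cyclotomic3 (z ^ t) =
      cyclotomic3 (z ^ r) + z ^ r * (z ^ (3 * q) - 1) + z ^ (2 * r) * (z ^ (3 * (2 * q)) - 1)"
    unfolding t cyclotomic3_def by (simp add: power_add power_mult algebra_simps power2_eq_square)
  moreover have "cyclotomic3 z dvd cyclotomic3 (z ^ r)"
  proof -
    have "r = 1 \<or> r = 2"
      using assms unfolding r_def by presburger
    moreover have "cyclotomic3 (z ^ 2) = cyclotomic3 z + z * (z ^ 3 - 1)"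
      by (simp add: cyclotomic3_def algebra_simps power2_eq_square power3_eq_cube)
    ultimately show ?thesis
      using cyclotomic3_dvd_power_minus_one[of 3 z] by auto
  qed
  ultimately show ?thesis
    by (simp add: cyclotomic3_dvd_power_minus_one)
qed

lemma coprime_cyclotomic3_power_minus_one:
  fixes x :: "'a::{comm_ring_1, algebraic_semidom}"
  assumes "is_unit (3 :: 'a)" and "gcd m (3 * a) = gcd m a"
  shows "coprime (cyclotomic3 (x ^ a)) (x ^ m - 1)"
proof (rule coprimeI)
  fix d
  assume d_cyc: "d dvd cyclotomic3 (x ^ a)" and d_m: "d dvd x ^ m - 1"
  have "d dvd x ^ (3 * a) - 1"
    using d_cyc power_three_minus_one_eq[of "x ^ a"] by (simp add: power_mult mult.commute dvd_mult)
  with d_m have "d dvd x ^ gcd m (3 * a) - 1"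
    by (rule dvd_power_gcd_minus_one)
  then have "d dvd x ^ gcd m a - 1"
    using assms(2) by simp
  then have d_y: "d dvd x ^ a - 1"
    using power_minus_one_dvd_power_mult_minus_one[of x "gcd m a" "a div gcd m a"] dvd_trans
    by simp
  have "cyclotomic3 (x ^ a) = (x ^ a - 1) * (x ^ a + 2) + 3"
    by (simp add: cyclotomic3_def algebra_simps power2_eq_square)
  then have "d dvd 3"
    using d_cyc d_y by (metis dvd_add_right_iff dvd_mult2)
  then show "is_unit d"
    using assms(1) dvd_unit_imp_unit by blast
qed

lemma X_power_eq_monom: "[:0, 1:] ^ n = (monom 1 n :: 'a::comm_semiring_1 poly)"
  by (simp add: monom_altdef)

lemma not_is_unit_cyclotomic3_X_power:
  assumes "g > 0"
  shows "\<not> is_unit (cyclotomic3 ([:0, 1:] ^ g :: 'a::field poly))"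
proof
  let ?p = "cyclotomic3 ([:0, 1:] ^ g :: 'a poly)"
  assume "is_unit ?p"
  have "?p = 1 + monom 1 g + monom 1 (g * 2)"
    unfolding cyclotomic3_def X_power_eq_monom monom_power by simp
  then have "coeff ?p (g * 2) = 1"
    using assms by (simp add: coeff_monom coeff_1)
  then have "?p \<noteq> 0" and "degree ?p \<noteq> 0"
    using assms le_degree[of ?p "g * 2"] by auto
  with \<open>is_unit ?p\<close> show False
    by (simp add: is_unit_iff_degree)
qed

lemma gcd_eq_if_coprime_cyclotomic3_X_power:
  assumes "coprime (cyclotomic3 ([:0, 1:] ^ a :: 'a::field poly)) ([:0, 1:] ^ m - 1)"
  shows "gcd m (3 * a) = gcd m a"
proof (rule ccontr)
  assume "gcd m (3 * a) \<noteq> gcd m a"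
  then obtain g m' a' where "g > 0" and m: "m = m' * g" and a: "a = a' * g"
    and "3 dvd m'" and "\<not> 3 dvd a'"
    by (rule gcd_mult_three_neqE)
  define z :: "'a poly" where "z = [:0, 1:] ^ g"
  have "cyclotomic3 z dvd cyclotomic3 ([:0, 1:] ^ a)"
    using cyclotomic3_dvd_cyclotomic3_power[OF \<open>\<not> 3 dvd a'\<close>, of z]
    by (simp add: z_def a mult.commute[of a'] power_mult)
  moreover have "cyclotomic3 z dvd [:0, 1:] ^ m - 1"
    using cyclotomic3_dvd_power_minus_one[OF \<open>3 dvd m'\<close>, of z]
    by (simp add: z_def m mult.commute[of m'] power_mult)
  ultimately have "is_unit (cyclotomic3 z)"
    using assms coprime_common_divisor by blast
  with \<open>g > 0\<close> show False
    unfolding z_def by (simp add: not_is_unit_cyclotomic3_X_power)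
qed

lemma coprime_cyclotomic3_X_power_iff:
  assumes "(3 :: 'a::field) \<noteq> 0"
  shows "coprime (cyclotomic3 ([:0, 1:] ^ a :: 'a poly)) ([:0, 1:] ^ m - 1) \<longleftrightarrow>
    gcd m (3 * a) = gcd m a"
proof -
  have "is_unit (3 :: 'a poly)"
    using assms by (simp add: numeral_poly is_unit_triv)
  then show ?thesis
    using coprime_cyclotomic3_power_minus_one gcd_eq_if_coprime_cyclotomic3_X_power by blast
qed

lemma coprime_add_mult_left_iff:
  fixes a b c :: "'a::semiring_gcd"
  shows "coprime (a + b * c) b \<longleftrightarrow> coprime a b"
proof -
  have "gcd b (c * b + a) = gcd b a"
    by (rule gcd_add_mult)
  then have "gcd (a + b * c) b = gcd a b"
    by (simp only: gcd.commute[of b] add.commute[of a] mult.commute[of b])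
  then show ?thesis
    by (simp add: coprime_iff_gcd_eq_1)
qed

lemma cyclotomic3_identity_char_two:
  fixes z w :: "'a::comm_ring_1"
  assumes "(2 :: 'a) = 0"
  shows "z ^ 6 * (1 + z + z ^ 2 + z ^ 5 + z ^ 6 + w * (1 + z + z ^ 4 + z ^ 5)) =
    cyclotomic3 z ^ 3 * cyclotomic3 (z ^ 3) + (z ^ 6 * w - 1) * (1 + z + z ^ 4 + z ^ 5)"
proof -
  have "cyclotomic3 z ^ 3 * cyclotomic3 (z ^ 3) + (z ^ 6 * w - 1) * (1 + z + z ^ 4 + z ^ 5) =
      z ^ 6 * (1 + z + z ^ 2 + z ^ 5 + z ^ 6 + w * (1 + z + z ^ 4 + z ^ 5)) +
      2 * (z + 3 * z ^ 2 + 4 * (z ^ 3 + z ^ 4 + z ^ 5 + z ^ 6 + z ^ 7 + z ^ 8 + z ^ 9)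
        + 3 * z ^ 10 + z ^ 11)"
    unfolding cyclotomic3_def by (simp add: algebra_simps power_add[symmetric] eval_nat_numeral)
  with assms show ?thesis
    by simp
qed

lemma pcompose_monom_one: "pcompose (monom 1 j) q = q ^ j"
  for q :: "'a::comm_ring_1 poly"
  unfolding X_power_eq_monom[symmetric]
  by (induction j) (simp_all add: pcompose_1 pcompose_mult pcompose_pCons)

lemma pcompose_cpoly:
  assumes "m \<ge> 6"
  shows "pcompose (cpoly m) q =
    1 + q + q ^ 2 + q ^ 5 + q ^ 6 + q ^ (m - 6) * (1 + q + q ^ 4 + q ^ 5)"
proof -
  obtain n where m: "m = n + 6"
    using assms by (metis le_add_diff_inverse2)
  have "pcompose (cpoly m) q = 1 + (\<Sum>j\<in>{1, 2, 5, 6::nat}. q ^ j + q ^ (m - j))"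
    by (simp only: cpoly_def pcompose_add pcompose_sum pcompose_1 pcompose_monom_one)
  also have "\<dots> = 1 + q + q ^ 2 + q ^ 5 + q ^ 6 + q ^ (m - 6) * (1 + q + q ^ 4 + q ^ 5)"
    by (simp add: m power_add algebra_simps)
  finally show ?thesis .
qed

lemma coprime_pcompose_cpoly_iff:
  fixes y P :: "bit poly"
  assumes "m \<ge> 6" and "P dvd y ^ m - 1" and "coprime y P"
  shows "coprime (pcompose (cpoly m) y) P \<longleftrightarrow>
    coprime (cyclotomic3 y) P \<and> coprime (cyclotomic3 (y ^ 3)) P"
proof -
  have "P dvd y ^ 6 * y ^ (m - 6) - 1"
    using assms(1,2) by (simp flip: power_add)
  then obtain r where r: "y ^ 6 * y ^ (m - 6) - 1 = P * r" ..
  have "(2 :: bit poly) = 0"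
    by (simp add: numeral_poly)
  have "y ^ 6 * pcompose (cpoly m) y =
      y ^ 6 * (1 + y + y ^ 2 + y ^ 5 + y ^ 6 + y ^ (m - 6) * (1 + y + y ^ 4 + y ^ 5))"
    using assms(1) by (simp add: pcompose_cpoly)
  also have "\<dots> = cyclotomic3 y ^ 3 * cyclotomic3 (y ^ 3) +
      (y ^ 6 * y ^ (m - 6) - 1) * (1 + y + y ^ 4 + y ^ 5)"
    using \<open>(2 :: bit poly) = 0\<close> by (rule cyclotomic3_identity_char_two)
  finally have "y ^ 6 * pcompose (cpoly m) y =
      cyclotomic3 y ^ 3 * cyclotomic3 (y ^ 3) + P * (r * (1 + y + y ^ 4 + y ^ 5))"
    by (simp add: r mult.assoc)
  with assms(3) show ?thesis
    using coprime_mult_left_iff[of "y ^ 6" "pcompose (cpoly m) y" P]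
    by (simp add: coprime_add_mult_left_iff)
qed

theorem proposition4:
  fixes m k :: nat
  assumes "m \<ge> 13" and "k \<ge> 1"
  shows "gcd (pcompose (cpoly m) (monom 1 k)) (monom 1 m - 1) = 1
           \<longleftrightarrow> gcd m (3 * k) = gcd m k"
proof -
  define X :: "bit poly" where "X = [:0, 1:]"
  have "coprime X (X ^ m - 1)"
    using coprime_power_left_iff[of X m "X ^ m - 1"] assms(1) by simp
  then have "coprime (X ^ k) (X ^ m - 1)"
    by simp
  moreover have "X ^ m - 1 dvd (X ^ k) ^ m - 1"
    using power_minus_one_dvd_power_mult_minus_one[of X m k]
    by (simp add: mult.commute flip: power_mult)
  ultimately have "coprime (pcompose (cpoly m) (X ^ k)) (X ^ m - 1) \<longleftrightarrow>
      coprime (cyclotomic3 (X ^ k)) (X ^ m - 1) \<and> coprime (cyclotomic3 (X ^ (3 * k))) (X ^ m - 1)"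
    using assms(1) by (simp add: coprime_pcompose_cpoly_iff mult.commute[of 3] power_mult)
  also have "\<dots> \<longleftrightarrow> gcd m (3 * k) = gcd m k \<and> gcd m (3 * (3 * k)) = gcd m (3 * k)"
    by (simp add: X_def coprime_cyclotomic3_X_power_iff)
  also have "\<dots> \<longleftrightarrow> gcd m (3 * k) = gcd m k"
    by (metis gcd_mult_gcd_right_nat)
  finally show ?thesis
    by (simp add: X_def X_power_eq_monom coprime_iff_gcd_eq_1)
qed

end
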